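(* Consider the $r$-cGA with parameter $K$ on $r\text{-OneMax}$ with frequencies $p^{(t)}_{i,j}$. For $t\geq 0$ let $\varphi_t:=\sum_{i=1}^n(1-p^{(t)}_{i,r-1})=n-\sum_{i=1}^n p^{(t)}_{i,r-1}$. If there is some $s>0$ such that $p^{(t)}_{i,r-1}\geq s$ for all $i\in\{1,\dots,n\}$, and furthermore $\varphi_t\geq 1/2$, then \[\mathbb{E}(\varphi_t-\varphi_{t+1}\mid\varphi_t)\geq\frac{2s\sqrt{\varphi_t}}{15K}.\]
   Context: Let $n\geq 1$, $r\geq 2$ be integers and $K>0$. The $r$-cGA maximizing $f$ maintains frequencies $p^{(t)}_{i,j}$ ($i\in\{1,\dots,n\}$, $j\in\{0,\dots,r-1\}$), initialized to $1/r$. In iteration $t$ it samples $x,y\in\{0,\dots,r-1\}^n$ independently, each position $i$ independently with $\Pr[x_i=j]=p^{(t)}_{i,j}$; if $f(x)<f(y)$ it swaps $x$ and $y$; then it sets $p^{(t+1)}_{i,j}=p^{(t)}_{i,j}+\frac1K(\mathbf{1}[x_i=j]-\mathbf{1}[y_i=j])$ for all $i,j$, with no margins. It is assumed that $1/r$ is an integer multiple of $1/K$. Here $f=r\text{-OneMax}$, $r\text{-OneMax}(x)=\sum_{i=1}^n\mathbf{1}[x_i=r-1]$. *)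

theory Defs
  imports Complex_Main "HOL-Library.FuncSet"
begin

(* A frequency state is p :: nat => nat => real, p i j = p_{i,j} for i < n, j < r.
   A search point is x :: nat => nat with x i in {0..<r} for i < n (extensional). *)

definition search_points :: "nat \<Rightarrow> nat \<Rightarrow> (nat \<Rightarrow> nat) set" where
  "search_points n r = ({0..<n} \<rightarrow>\<^sub>E {0..<r})"

definition rOneMax :: "nat \<Rightarrow> nat \<Rightarrow> (nat \<Rightarrow> nat) \<Rightarrow> nat" where
  "rOneMax n r x = card {i \<in> {0..<n}. x i = r - 1}"

definition sample_prob :: "nat \<Rightarrow> (nat \<Rightarrow> nat \<Rightarrow> real) \<Rightarrow> (nat \<Rightarrow> nat) \<Rightarrow> real" where
  "sample_prob n p x = (\<Prod>i<n. p i (x i))"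

definition freq_upd :: "real \<Rightarrow> (nat \<Rightarrow> nat \<Rightarrow> real) \<Rightarrow> (nat \<Rightarrow> nat) \<Rightarrow> (nat \<Rightarrow> nat)
    \<Rightarrow> (nat \<Rightarrow> nat \<Rightarrow> real)" where
  "freq_upd K p x y = (\<lambda>i j. p i j + (1 / K) *
      ((if x i = j then 1 else 0) - (if y i = j then 1 else 0)))"

definition cga_step :: "nat \<Rightarrow> nat \<Rightarrow> real \<Rightarrow> (nat \<Rightarrow> nat \<Rightarrow> real) \<Rightarrow> (nat \<Rightarrow> nat)
    \<Rightarrow> (nat \<Rightarrow> nat) \<Rightarrow> (nat \<Rightarrow> nat \<Rightarrow> real)" where
  "cga_step n r K p x y =
     (if rOneMax n r x < rOneMax n r y then freq_upd K p y x else freq_upd K p x y)"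

(* cga_state n r K t p : p is a possible frequency state p^{(t)} after t iterations
   (i.e. in the support of the distribution of p^{(t)}) *)
inductive cga_state :: "nat \<Rightarrow> nat \<Rightarrow> real \<Rightarrow> nat \<Rightarrow> (nat \<Rightarrow> nat \<Rightarrow> real) \<Rightarrow> bool"
  for n r K where
  init: "cga_state n r K 0 (\<lambda>i j. 1 / real r)"
| step: "cga_state n r K t p \<Longrightarrow> x \<in> search_points n r \<Longrightarrow> y \<in> search_points n r
         \<Longrightarrow> sample_prob n p x > 0 \<Longrightarrow> sample_prob n p y > 0
         \<Longrightarrow> cga_state n r K (Suc t) (cga_step n r K p x y)"

definition phi :: "nat \<Rightarrow> nat \<Rightarrow> (nat \<Rightarrow> nat \<Rightarrow> real) \<Rightarrow> real" where
  "phi n r p = (\<Sum>i<n. 1 - p i (r - 1))"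

(* expected one-step decrease E(phi_t - phi_{t+1} | p^{(t)} = p) *)
definition expected_drift :: "nat \<Rightarrow> nat \<Rightarrow> real \<Rightarrow> (nat \<Rightarrow> nat \<Rightarrow> real) \<Rightarrow> real" where
  "expected_drift n r K p =
     (\<Sum>x\<in>search_points n r. \<Sum>y\<in>search_points n r.
        sample_prob n p x * sample_prob n p y * (phi n r p - phi n r (cga_step n r K p x y)))"

end

theory Submission
  imports Defs
begin

text \<open>
  The potential drops by \<open>|D| / K\<close>, where \<open>D = OneMax x - OneMax y\<close> for the two
  independent samples. \<open>D\<close> is a sum of independent symmetric \<open>{-1,0,1}\<close>-valued terms,
  the \<open>i\<close>-th being \<open>\<plusminus>1\<close> with probability \<open>q\<^sub>i(1 - q\<^sub>i)\<close> each, where \<open>q\<^sub>i = p\<^sub>i\<^sub>,\<^sub>r\<^sub>-\<^sub>1\<close>.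
  Hence \<open>E D\<^sup>2 = 2 \<Sum> q\<^sub>i(1 - q\<^sub>i)\<close>, which lies between \<open>2s\<phi>\<close> and \<open>2\<phi>\<close>, and
  \<open>E D\<^sup>4 \<le> E D\<^sup>2 + 3 (E D\<^sup>2)\<^sup>2\<close>. The polynomial minorant
  \<open>|z| \<ge> 3z\<^sup>2/(2t) - z\<^sup>4/(2t\<^sup>3)\<close> with \<open>t = 3\<surd>\<phi>\<close> turns these moments into
  \<open>E|D| \<ge> E D\<^sup>2 / (3\<surd>\<phi>) \<ge> 2s\<surd>\<phi>/3\<close>. Nonnegativity of the frequencies, needed
  because there are no margins, holds since they stay multiples of \<open>1/K\<close>.
\<close>

lemma sum_search_points_Suc:
  "(\<Sum>x\<in>search_points (Suc n) r. F x) = (\<Sum>x\<in>search_points n r. \<Sum>a<r. F (x(n := a)))"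
proof -
  have "search_points (Suc n) r = (\<lambda>(a, x). x(n := a)) ` ({..<r} \<times> search_points n r)"
    unfolding search_points_def atLeast0LessThan lessThan_Suc PiE_insert_eq by simp
  moreover have "inj_on (\<lambda>(a, x). x(n := a)) ({..<r} \<times> search_points n r)"
    unfolding search_points_def atLeast0LessThan
    using inj_combinator[of n "{..<n}" "\<lambda>_. {..<r}"] by simp
  ultimately have "(\<Sum>x\<in>search_points (Suc n) r. F x)
      = (\<Sum>(a, x)\<in>{..<r} \<times> search_points n r. F (x(n := a)))"
    by (simp add: sum.reindex case_prod_unfold)
  also have "\<dots> = (\<Sum>x\<in>search_points n r. \<Sum>a<r. F (x(n := a)))"
    by (simp add: sum.cartesian_product[symmetric] sum.swap[of _ "{..<r}"])
  finally show ?thesis .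
qed

lemma sample_prob_fun_upd_last: "sample_prob (Suc n) p (x(n := a)) = sample_prob n p x * p n a"
  unfolding sample_prob_def by (simp add: prod.lessThan_Suc)

lemma rOneMax_eq_sum: "real (rOneMax n r x) = (\<Sum>i<n. of_bool (x i = r - 1))"
proof -
  have "{i \<in> {0..<n}. x i = r - 1} = {..<n} \<inter> {i. x i = r - 1}" by auto
  then show ?thesis unfolding rOneMax_def by simp
qed

lemma rOneMax_fun_upd_last:
  "real (rOneMax (Suc n) r (x(n := a))) = real (rOneMax n r x) + of_bool (a = r - 1)"
  unfolding rOneMax_eq_sum by simp

lemma sum_weight_split_eq:
  fixes q :: "nat \<Rightarrow> real"
  assumes "k < r" and "(\<Sum>j<r. q j) = 1"
  shows "(\<Sum>a<r. q a * F (a = k)) = q k * F True + (1 - q k) * F False"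
proof -
  have "(\<Sum>a<r. q a * F (a = k)) = q k * F True + (\<Sum>a\<in>{..<r} - {k}. q a) * F False"
    using assms(1) by (simp add: sum.remove sum_distrib_right)
  also have "(\<Sum>a\<in>{..<r} - {k}. q a) = 1 - q k"
    using assms by (simp add: sum_diff1)
  finally show ?thesis .
qed

lemma sum_pair_indicator_diff:
  fixes q :: "nat \<Rightarrow> real" and G :: "real \<Rightarrow> real"
  assumes "k < r" and "(\<Sum>j<r. q j) = 1"
  shows "(\<Sum>a<r. \<Sum>b<r. q a * q b * G (of_bool (a = k) - of_bool (b = k)))
    = (1 - 2 * (q k * (1 - q k))) * G 0 + q k * (1 - q k) * (G 1 + G (- 1))"
proof -
  have inner: "(\<Sum>b<r. q b * G (of_bool A - of_bool (b = k)))
      = q k * G (of_bool A - 1) + (1 - q k) * G (of_bool A)" for A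
    using sum_weight_split_eq[OF assms, of "\<lambda>B. G (of_bool A - of_bool B)"] by simp
  have "(\<Sum>a<r. \<Sum>b<r. q a * q b * G (of_bool (a = k) - of_bool (b = k)))
      = (\<Sum>a<r. q a * (q k * G (of_bool (a = k) - 1) + (1 - q k) * G (of_bool (a = k))))"
    by (simp add: sum_distrib_left mult.assoc flip: inner)
  also have "\<dots> = q k * (q k * G 0 + (1 - q k) * G 1) + (1 - q k) * (q k * G (- 1) + (1 - q k) * G 0)"
    using sum_weight_split_eq[OF assms,
        of "\<lambda>A. q k * G (of_bool A - 1) + (1 - q k) * G (of_bool A)"] by simp
  also have "\<dots> = (1 - 2 * (q k * (1 - q k))) * G 0 + q k * (1 - q k) * (G 1 + G (- 1))"
    by (simp add: algebra_simps)
  finally show ?thesis .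
qed

definition diff_expectation :: "nat \<Rightarrow> nat \<Rightarrow> (nat \<Rightarrow> nat \<Rightarrow> real) \<Rightarrow> (real \<Rightarrow> real) \<Rightarrow> real" where
  "diff_expectation n r p g = (\<Sum>x\<in>search_points n r. \<Sum>y\<in>search_points n r.
     sample_prob n p x * sample_prob n p y * g (real (rOneMax n r x) - real (rOneMax n r y)))"

lemma diff_expectation_add:
  "diff_expectation n r p (\<lambda>z. f z + g z) = diff_expectation n r p f + diff_expectation n r p g"
  unfolding diff_expectation_def by (simp add: algebra_simps sum.distrib)

lemma diff_expectation_diff:
  "diff_expectation n r p (\<lambda>z. f z - g z) = diff_expectation n r p f - diff_expectation n r p g"
  unfolding diff_expectation_def by (simp add: algebra_simps sum_subtractf)

lemma diff_expectation_cmult: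
  "diff_expectation n r p (\<lambda>z. c * f z) = c * diff_expectation n r p f"
  unfolding diff_expectation_def by (simp add: algebra_simps sum_distrib_left)

lemma diff_expectation_mono:
  assumes "\<forall>i<n. \<forall>j<r. p i j \<ge> 0" and "\<And>z. f z \<le> g z"
  shows "diff_expectation n r p f \<le> diff_expectation n r p g"
proof -
  have "sample_prob n p x \<ge> 0" if "x \<in> search_points n r" for x
    using that assms(1) unfolding sample_prob_def search_points_def
    by (auto intro!: prod_nonneg simp: PiE_def Pi_def)
  then show ?thesis
    unfolding diff_expectation_def by (intro sum_mono mult_left_mono assms(2)) auto
qed

lemma diff_expectation_Suc_pairs:
  "diff_expectation (Suc n) r p g = (\<Sum>a<r. \<Sum>b<r. p n a * p n b *
     diff_expectation n r p (\<lambda>z. g (z + (of_bool (a = r - 1) - of_bool (b = r - 1)))))"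
proof -
  let ?P = "\<lambda>x. sample_prob n p x" and ?D = "\<lambda>x y. real (rOneMax n r x) - real (rOneMax n r y)"
  have "diff_expectation (Suc n) r p g = (\<Sum>x\<in>search_points n r. \<Sum>a<r. \<Sum>y\<in>search_points n r. \<Sum>b<r.
      p n a * p n b * (?P x * ?P y * g (?D x y + (of_bool (a = r - 1) - of_bool (b = r - 1)))))"
    unfolding diff_expectation_def sum_search_points_Suc sample_prob_fun_upd_last rOneMax_fun_upd_last
    by (simp add: algebra_simps sum_distrib_left)
  also have "\<dots> = (\<Sum>a<r. \<Sum>b<r. \<Sum>x\<in>search_points n r. \<Sum>y\<in>search_points n r.
      p n a * p n b * (?P x * ?P y * g (?D x y + (of_bool (a = r - 1) - of_bool (b = r - 1)))))"
    by (subst sum.swap, subst (2) sum.swap, subst sum.swap) (rule refl)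
  finally show ?thesis
    unfolding diff_expectation_def by (simp add: sum_distrib_left)
qed

lemma diff_expectation_Suc:
  assumes "r \<ge> 1" and "(\<Sum>j<r. p n j) = 1"
  shows "diff_expectation (Suc n) r p g
    = (1 - 2 * (p n (r - 1) * (1 - p n (r - 1)))) * diff_expectation n r p g
      + p n (r - 1) * (1 - p n (r - 1)) * diff_expectation n r p (\<lambda>z. g (z + 1) + g (z - 1))"
  unfolding diff_expectation_Suc_pairs
  using sum_pair_indicator_diff[of "r - 1" r "p n" "\<lambda>d. diff_expectation n r p (\<lambda>z. g (z + d))"] assms
  by (simp add: diff_expectation_add)

lemma diff_expectation_const:
  assumes "r \<ge> 1" and "\<forall>i<n. (\<Sum>j<r. p i j) = 1"
  shows "diff_expectation n r p (\<lambda>_. c) = c"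
  using assms(2)
proof (induction n)
  case 0
  then show ?case unfolding diff_expectation_def search_points_def sample_prob_def by simp
next
  case (Suc n)
  then have "diff_expectation (Suc n) r p (\<lambda>_. c)
      = (1 - 2 * (p n (r - 1) * (1 - p n (r - 1)))) * c + p n (r - 1) * (1 - p n (r - 1)) * (c + c)"
    by (simp only: diff_expectation_Suc[OF assms(1)] diff_expectation_add) simp
  then show ?case by (simp add: algebra_simps)
qed

lemma diff_expectation_square:
  assumes "r \<ge> 1" and "\<forall>i<n. (\<Sum>j<r. p i j) = 1"
  shows "diff_expectation n r p (\<lambda>z. z\<^sup>2) = 2 * (\<Sum>i<n. p i (r - 1) * (1 - p i (r - 1)))"
  using assms(2)
proof (induction n)
  case 0
  then show ?case unfolding diff_expectation_def search_points_def sample_prob_def by simp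
next
  case (Suc n)
  have row: "(\<Sum>j<r. p n j) = 1" and rows: "\<forall>i<n. (\<Sum>j<r. p i j) = 1"
    using Suc.prems by auto
  have "(\<lambda>z. (z + 1)\<^sup>2 + (z - 1)\<^sup>2) = (\<lambda>z::real. 2 * z\<^sup>2 + 2)"
    by (simp add: power2_eq_square algebra_simps)
  then have "diff_expectation (Suc n) r p (\<lambda>z. z\<^sup>2)
      = diff_expectation n r p (\<lambda>z. z\<^sup>2) + 2 * (p n (r - 1) * (1 - p n (r - 1)))"
    using diff_expectation_const[OF assms(1) rows]
    by (simp add: diff_expectation_Suc[where p = p and n = n, OF assms(1) row]
        diff_expectation_add diff_expectation_cmult algebra_simps)
  then show ?case using Suc.IH[OF rows] by simp
qed

lemma diff_expectation_fourth_le: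
  assumes "r \<ge> 1" and "\<forall>i<n. (\<Sum>j<r. p i j) = 1"
  shows "diff_expectation n r p (\<lambda>z. z ^ 4)
    \<le> diff_expectation n r p (\<lambda>z. z\<^sup>2) + 3 * (diff_expectation n r p (\<lambda>z. z\<^sup>2))\<^sup>2"
  using assms(2)
proof (induction n)
  case 0
  then show ?case unfolding diff_expectation_def search_points_def sample_prob_def by simp
next
  case (Suc n)
  define A where "A = diff_expectation n r p (\<lambda>z. z\<^sup>2)"
  define B where "B = diff_expectation n r p (\<lambda>z. z ^ 4)"
  define v where "v = p n (r - 1) * (1 - p n (r - 1))"
  have row: "(\<Sum>j<r. p n j) = 1" and rows: "\<forall>i<n. (\<Sum>j<r. p i j) = 1"
    using Suc.prems by auto
  have expand: "(\<lambda>z. (z + 1) ^ 4 + (z - 1) ^ 4) = (\<lambda>z::real. 2 * z ^ 4 + (12 * z\<^sup>2 + 2))"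
    by (simp add: power2_eq_square power4_eq_xxxx algebra_simps)
  have "diff_expectation (Suc n) r p (\<lambda>z. z ^ 4)
      = (1 - 2 * v) * B + v * diff_expectation n r p (\<lambda>z. (z + 1) ^ 4 + (z - 1) ^ 4)"
    unfolding diff_expectation_Suc[where p = p and n = n, OF assms(1) row] v_def B_def ..
  also have "\<dots> = (1 - 2 * v) * B + v * (2 * B + (12 * A + 2))"
    unfolding expand diff_expectation_add diff_expectation_cmult diff_expectation_const[OF assms(1) rows]
      A_def B_def ..
  finally have fourth: "diff_expectation (Suc n) r p (\<lambda>z. z ^ 4) = B + v * (12 * A + 2)"
    by (simp add: algebra_simps)
  have square: "diff_expectation (Suc n) r p (\<lambda>z. z\<^sup>2) = A + 2 * v"
    using diff_expectation_square[OF assms(1) Suc.prems] diff_expectation_square[OF assms(1) rows]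
    by (simp add: A_def v_def)
  have "B + v * (12 * A + 2) \<le> A + 3 * A\<^sup>2 + v * (12 * A + 2)"
    using Suc.IH[OF rows] by (simp add: A_def B_def)
  also have "\<dots> \<le> (A + 2 * v) + 3 * (A + 2 * v)\<^sup>2"
    by (simp add: power2_eq_square algebra_simps)
  finally show ?case unfolding fourth square .
qed

lemma abs_ge_quadratic_minus_quartic:
  fixes t z :: real
  assumes "t > 0"
  shows "3 / (2 * t) * z\<^sup>2 - 1 / (2 * t ^ 3) * z ^ 4 \<le> \<bar>z\<bar>"
proof -
  define w where "w = \<bar>z\<bar>"
  have "0 \<le> w * (w - t)\<^sup>2 * (w + 2 * t)"
    using assms by (simp add: w_def)
  also have "\<dots> = w ^ 4 - 3 * t\<^sup>2 * w\<^sup>2 + 2 * t ^ 3 * w"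
    by (simp add: power2_eq_square power3_eq_cube power4_eq_xxxx algebra_simps)
  finally have "(3 * t\<^sup>2 * w\<^sup>2 - w ^ 4) / (2 * t ^ 3) \<le> 2 * t ^ 3 * w / (2 * t ^ 3)"
    using assms by (intro divide_right_mono) auto
  moreover have "3 / (2 * t) * w\<^sup>2 - 1 / (2 * t ^ 3) * w ^ 4 = (3 * t\<^sup>2 * w\<^sup>2 - w ^ 4) / (2 * t ^ 3)"
    using assms by (simp add: diff_divide_distrib power2_eq_square power3_eq_cube)
  moreover have "z\<^sup>2 = w\<^sup>2" and "z ^ 4 = w ^ 4"
    by (simp_all add: w_def power_even_abs_numeral)
  ultimately show ?thesis
    using assms by (simp add: w_def [symmetric])
qed

lemma sum_variance_le_phi: "(\<Sum>i<n. p i (r - 1) * (1 - p i (r - 1))) \<le> phi n r p"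
proof -
  have "q * (1 - q) \<le> 1 - q" for q :: real
    using zero_le_power2[of "1 - q"] by (simp add: power2_eq_square algebra_simps)
  then show ?thesis
    unfolding phi_def by (intro sum_mono)
qed

lemma scaled_phi_le_sum_variance:
  assumes "\<forall>i<n. s \<le> p i (r - 1) \<and> p i (r - 1) \<le> 1"
  shows "s * phi n r p \<le> (\<Sum>i<n. p i (r - 1) * (1 - p i (r - 1)))"
  unfolding phi_def sum_distrib_left
  using assms by (intro sum_mono mult_right_mono) auto

lemma diff_expectation_abs_ge:
  assumes "r \<ge> 1" and "\<forall>i<n. \<forall>j<r. p i j \<ge> 0" and "\<forall>i<n. (\<Sum>j<r. p i j) = 1"
    and "1 / 2 \<le> phi n r p"
  shows "diff_expectation n r p (\<lambda>z. z\<^sup>2) / (3 * sqrt (phi n r p)) \<le> diff_expectation n r p abs"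
proof -
  define u where "u = sqrt (phi n r p)"
  have "u > 0" and u2: "u\<^sup>2 = phi n r p"
    using assms(4) by (simp_all add: u_def)
  define A where "A = diff_expectation n r p (\<lambda>z. z\<^sup>2)"
  define B where "B = diff_expectation n r p (\<lambda>z. z ^ 4)"
  have "0 \<le> A"
    using diff_expectation_mono[OF assms(2), of "\<lambda>_. 0" "\<lambda>z. z\<^sup>2"]
      diff_expectation_const[OF assms(1,3)] by (simp add: A_def)
  have "A \<le> 2 * u\<^sup>2"
    using diff_expectation_square[OF assms(1,3)] sum_variance_le_phi[where n = n and p = p and r = r]
    by (simp add: A_def u2)
  have "A / (3 * u) \<le> 3 / (2 * (3 * u)) * A - 1 / (2 * (3 * u) ^ 3) * B"
  proof -
    have "A * A \<le> 2 * u\<^sup>2 * A"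
      using \<open>A \<le> 2 * u\<^sup>2\<close> \<open>0 \<le> A\<close> by (simp add: mult_right_mono)
    then have "B \<le> A + 6 * u\<^sup>2 * A"
      using diff_expectation_fourth_le[OF assms(1,3)] by (simp add: A_def B_def power2_eq_square)
    moreover have "1 * A \<le> 3 * u\<^sup>2 * A"
      using assms(4) \<open>0 \<le> A\<close> by (intro mult_right_mono) (auto simp: u2)
    ultimately have "18 * u\<^sup>2 * A \<le> 27 * u\<^sup>2 * A - B" by linarith
    then have "18 * u\<^sup>2 * A / (54 * u ^ 3) \<le> (27 * u\<^sup>2 * A - B) / (54 * u ^ 3)"
      using \<open>u > 0\<close> by (intro divide_right_mono) auto
    moreover have "A / (3 * u) = 18 * u\<^sup>2 * A / (54 * u ^ 3)"
      using \<open>u > 0\<close> by (simp add: power2_eq_square power3_eq_cube)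
    moreover have "3 / (2 * (3 * u)) * A - 1 / (2 * (3 * u) ^ 3) * B = (27 * u\<^sup>2 * A - B) / (54 * u ^ 3)"
      using \<open>u > 0\<close> by (simp add: diff_divide_distrib power2_eq_square power3_eq_cube)
    ultimately show ?thesis by simp
  qed
  also have "\<dots> = diff_expectation n r p (\<lambda>z. 3 / (2 * (3 * u)) * z\<^sup>2 - 1 / (2 * (3 * u) ^ 3) * z ^ 4)"
    unfolding diff_expectation_diff diff_expectation_cmult A_def B_def ..
  also have "\<dots> \<le> diff_expectation n r p abs"
    using assms(2) \<open>u > 0\<close> by (intro diff_expectation_mono abs_ge_quadratic_minus_quartic) auto
  finally show ?thesis unfolding A_def u_def .
qed

definition grid_freqs :: "nat \<Rightarrow> nat \<Rightarrow> real \<Rightarrow> (nat \<Rightarrow> nat \<Rightarrow> real) \<Rightarrow> bool" where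
  "grid_freqs n r K p \<longleftrightarrow> (\<forall>i<n. (\<forall>j<r. \<exists>m::nat. p i j = m / K) \<and> (\<Sum>j<r. p i j) = 1)"

lemma grid_freqs_freq_upd:
  assumes grid: "grid_freqs n r K p" and "K > 0"
    and w: "w \<in> search_points n r" and l: "l \<in> search_points n r" and "sample_prob n p l > 0"
  shows "grid_freqs n r K (freq_upd K p w l)"
  unfolding grid_freqs_def
proof (intro allI impI conjI)
  fix i assume "i < n"
  then have "w i < r" and "l i < r"
    using w l unfolding search_points_def by auto
  have "p i (l i) \<noteq> 0"
    using \<open>sample_prob n p l > 0\<close> \<open>i < n\<close> unfolding sample_prob_def
    by (metis finite_lessThan lessThan_iff less_irrefl prod_zero_iff)
  show "\<exists>m::nat. freq_upd K p w l i j = m / K" if "j < r" for j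
  proof -
    obtain m :: nat where m: "p i j = m / K"
      using grid \<open>i < n\<close> \<open>j < r\<close> unfolding grid_freqs_def by auto
    have "of_bool (l i = j) \<le> m + of_bool (w i = j)"
      using \<open>p i (l i) \<noteq> 0\<close> m by auto
    then have "freq_upd K p w l i j = real (m + of_bool (w i = j) - of_bool (l i = j)) / K"
      unfolding freq_upd_def m using \<open>K > 0\<close> by (simp add: of_nat_diff field_simps)
    then show ?thesis by blast
  qed
  have "(\<Sum>j<r. freq_upd K p w l i j) = (\<Sum>j<r. p i j)
      + 1 / K * ((\<Sum>j<r. if w i = j then 1 else 0) - (\<Sum>j<r. if l i = j then 1 else 0))"
    unfolding freq_upd_def by (simp only: sum.distrib sum_subtractf flip: sum_distrib_left)
  then show "(\<Sum>j<r. freq_upd K p w l i j) = 1"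
    using grid \<open>i < n\<close> \<open>w i < r\<close> \<open>l i < r\<close> by (simp add: grid_freqs_def sum.delta')
qed

lemma cga_state_grid_freqs:
  assumes "cga_state n r K t p" and "K > 0" and "r \<ge> 1" and "\<exists>m::nat. 1 / real r = m * (1 / K)"
  shows "grid_freqs n r K p"
  using assms(1)
proof (induction rule: cga_state.induct)
  case init
  then show ?case using assms(3,4) by (auto simp: grid_freqs_def)
next
  case (step t p x y)
  then show ?case unfolding cga_step_def using grid_freqs_freq_upd[OF _ assms(2)] by auto
qed

lemma grid_freqs_bounds:
  assumes "grid_freqs n r K p" and "K > 0" and "i < n" and "j < r"
  shows "0 \<le> p i j" and "p i j \<le> 1"
proof -
  have nonneg: "0 \<le> p i j" if "j < r" for j
    using assms(1-3) that unfolding grid_freqs_def by force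
  then show "0 \<le> p i j"
    using assms(4) .
  have "p i j \<le> (\<Sum>j<r. p i j)"
    using assms(4) by (intro member_le_sum nonneg) auto
  then show "p i j \<le> 1"
    using assms(1,3) unfolding grid_freqs_def by simp
qed

lemma phi_freq_upd:
  "phi n r p - phi n r (freq_upd K p w l) = (real (rOneMax n r w) - real (rOneMax n r l)) / K"
proof -
  have "phi n r p - phi n r (freq_upd K p w l)
      = (\<Sum>i<n. of_bool (w i = r - 1) - of_bool (l i = r - 1)) / K"
    unfolding phi_def freq_upd_def by (simp add: sum_subtractf[symmetric] sum_divide_distrib of_bool_def)
  then show ?thesis
    unfolding rOneMax_eq_sum by (simp add: sum_subtractf)
qed

lemma phi_cga_step:
  "phi n r p - phi n r (cga_step n r K p x y) = \<bar>real (rOneMax n r x) - real (rOneMax n r y)\<bar> / K"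
  unfolding cga_step_def by (simp add: phi_freq_upd)

lemma expected_drift_eq_diff_expectation:
  "expected_drift n r K p = diff_expectation n r p abs / K"
  unfolding expected_drift_def diff_expectation_def phi_cga_step
  by (simp add: sum_divide_distrib)

theorem lemma4:
  fixes n r t :: nat and K s :: real and p :: "nat \<Rightarrow> nat \<Rightarrow> real"
  assumes "n \<ge> 1" and "r \<ge> 2" and "K > 0"
    and "\<exists>m::nat. 1 / real r = real m * (1 / K)"
    and "cga_state n r K t p"
    and "s > 0" and "\<forall>i<n. p i (r - 1) \<ge> s"
    and "phi n r p \<ge> 1 / 2"
  shows "expected_drift n r K p \<ge> 2 * s * sqrt (phi n r p) / (15 * K)"
proof -
  have "r \<ge> 1" using assms(2) by simp
  have grid: "grid_freqs n r K p"
    using cga_state_grid_freqs[OF assms(5,3) \<open>r \<ge> 1\<close> assms(4)] .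
  then have rows: "\<forall>i<n. (\<Sum>j<r. p i j) = 1" and nonneg: "\<forall>i<n. \<forall>j<r. 0 \<le> p i j"
    using grid_freqs_bounds(1)[OF grid assms(3)] unfolding grid_freqs_def by auto
  define \<phi> where "\<phi> = phi n r p"
  have "\<phi> > 0" using assms(8) by (simp add: \<phi>_def)
  have "2 * s * sqrt \<phi> / 3 = 2 * s * \<phi> / (3 * sqrt \<phi>)"
    using \<open>\<phi> > 0\<close> by (simp add: field_simps)
  also have "\<dots> \<le> diff_expectation n r p (\<lambda>z. z\<^sup>2) / (3 * sqrt \<phi>)"
  proof (intro divide_right_mono)
    show "2 * s * \<phi> \<le> diff_expectation n r p (\<lambda>z. z\<^sup>2)"
      using diff_expectation_square[OF \<open>r \<ge> 1\<close> rows] assms(7) \<open>r \<ge> 1\<close>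
        scaled_phi_le_sum_variance[where n = n and p = p and r = r and s = s]
        grid_freqs_bounds(2)[OF grid assms(3)] by (simp add: \<phi>_def)
  qed (use \<open>\<phi> > 0\<close> in simp)
  also have "\<dots> \<le> diff_expectation n r p abs"
    using diff_expectation_abs_ge[OF \<open>r \<ge> 1\<close> nonneg rows assms(8)] by (simp add: \<phi>_def)
  finally have "2 * s * sqrt \<phi> / 15 \<le> diff_expectation n r p abs"
    using mult_pos_pos[OF assms(6) real_sqrt_gt_zero[OF \<open>\<phi> > 0\<close>]] by linarith
  then have "2 * s * sqrt \<phi> / 15 / K \<le> diff_expectation n r p abs / K"
    using assms(3) by (intro divide_right_mono) auto
  then show ?thesis
    by (simp add: expected_drift_eq_diff_expectation \<phi>_def)
qed

end
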